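(* Let $X$ be a second countable locally compact Abelian group and let $K$ be a compact subgroup of $X$. Let $\xi_1,\xi_2,\xi_3$ be independent identically distributed random variables with values in $X$ and distribution $m_K$. Let $\alpha$ be a random variable with a Bernoulli distribution taking the values $0$ and $1$ with probability $\frac12$ each, independent of $(\xi_1,\xi_2,\xi_3)$. Then the following are equivalent: (i) the linear forms $2\xi_1$ and $\xi_1+\xi_2+2\alpha\xi_3$ are identically distributed; (ii) $K$ is a Corwin group.
   Context: $m_K$ denotes the Haar probability distribution on the compact subgroup $K$. A group $K$ is a Corwin group if $\{2x:x\in K\}=K$. *)

theory Defs
  imports "HOL-Analysis.Analysis" "HOL-Probability.Probability"
begin

definition subgroup_add :: "'a::ab_group_add set \<Rightarrow> bool" where
  "subgroup_add K \<longleftrightarrow> 0 \<in> K \<and> (\<forall>x\<in>K. \<forall>y\<in>K. x + y \<in> K) \<and> (\<forall>x\<in>K. - x \<in> K)"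

text \<open>mu is the Haar probability distribution m_K of the compact subgroup K, viewed as a
  Borel measure on the ambient group: a Borel probability measure concentrated on K and
  invariant under translations by elements of K.\<close>
definition haar_prob :: "'a::{topological_ab_group_add} set \<Rightarrow> 'a measure \<Rightarrow> bool" where
  "haar_prob K mu \<longleftrightarrow> prob_space mu \<and> sets mu = sets borel \<and> emeasure mu K = 1 \<and>
     (\<forall>x\<in>K. distr mu borel (\<lambda>y. x + y) = mu)"

definition corwin :: "'a::ab_group_add set \<Rightarrow> bool" where
  "corwin K \<longleftrightarrow> (\<lambda>x. x + x) ` K = K"

end

theory Submission
  imports Defs
begin

text \<open>
  The Haar distribution \<open>m\<^sub>K\<close> absorbs every independent summand that lies in \<open>K\<close> almost surely:
  by Fubini, conditioning on that summand leaves a translate of \<open>m\<^sub>K\<close> by an element of \<open>K\<close>,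
  which is \<open>m\<^sub>K\<close> again. Computing the law of \<open>x + y\<close> under \<open>\<mu> \<Otimes> \<nu>\<close> by fixing either
  coordinate in turn shows in the same way that \<open>m\<^sub>K\<close> is the only \<open>K\<close>-invariant probability
  on \<open>K\<close>.

  Since \<open>\<xi>\<^sub>1\<close> is independent of \<open>(\<alpha>, \<xi>\<^sub>2, \<xi>\<^sub>3)\<close> and \<open>\<xi>\<^sub>2 + 2\<alpha>\<xi>\<^sub>3 \<in> K\<close>, the form
  \<open>\<xi>\<^sub>1 + \<xi>\<^sub>2 + 2\<alpha>\<xi>\<^sub>3\<close> always has law \<open>m\<^sub>K\<close>, so (i) says that doubling preserves \<open>m\<^sub>K\<close>.
  If \<open>2K = K\<close>, the image of \<open>m\<^sub>K\<close> under doubling is \<open>K\<close>-invariant, hence equal to \<open>m\<^sub>K\<close>.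
  Conversely, if doubling preserves \<open>m\<^sub>K\<close>, the compact subgroup \<open>2K\<close> has full measure; a coset
  \<open>x + 2K \<noteq> 2K\<close> with \<open>x \<in> K\<close> would be a disjoint translate of full measure as well, so \<open>2K = K\<close>.
\<close>

lemma distr_pair_measure_eqI_fst:
  assumes M1: "prob_space M1" and M2: "sigma_finite_measure M2"
    and f: "f \<in> measurable (M1 \<Otimes>\<^sub>M M2) N"
    and sections: "AE x in M1. distr M2 N (\<lambda>y. f (x, y)) = \<mu>"
    and sets_\<mu>: "sets \<mu> = sets N"
  shows "distr (M1 \<Otimes>\<^sub>M M2) N f = \<mu>"
proof (rule measure_eqI)
  interpret M1: prob_space M1 by (rule M1)
  interpret M2: sigma_finite_measure M2 by (rule M2)
  show "sets (distr (M1 \<Otimes>\<^sub>M M2) N f) = sets \<mu>" using sets_\<mu> by simp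
  fix A assume "A \<in> sets (distr (M1 \<Otimes>\<^sub>M M2) N f)"
  then have A: "A \<in> sets N" by simp
  have "emeasure (distr (M1 \<Otimes>\<^sub>M M2) N f) A = emeasure (M1 \<Otimes>\<^sub>M M2) (f -` A \<inter> space (M1 \<Otimes>\<^sub>M M2))"
    by (rule emeasure_distr[OF f A])
  also have "\<dots> = (\<integral>\<^sup>+x. emeasure M2 (Pair x -` (f -` A \<inter> space (M1 \<Otimes>\<^sub>M M2))) \<partial>M1)"
    using measurable_sets[OF f A] by (rule M2.emeasure_pair_measure_alt)
  also have "\<dots> = (\<integral>\<^sup>+x. emeasure \<mu> A \<partial>M1)"
  proof (rule nn_integral_cong_AE)
    show "AE x in M1. emeasure M2 (Pair x -` (f -` A \<inter> space (M1 \<Otimes>\<^sub>M M2))) = emeasure \<mu> A"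
      using sections AE_space
    proof eventually_elim
      case (elim x)
      have "Pair x -` (f -` A \<inter> space (M1 \<Otimes>\<^sub>M M2)) = (\<lambda>y. f (x, y)) -` A \<inter> space M2"
        using elim(2) by (auto simp: space_pair_measure)
      then show ?case
        using emeasure_distr[OF measurable_Pair2[OF f elim(2)] A] elim(1) by simp
    qed
  qed
  also have "\<dots> = emeasure \<mu> A" by (simp add: M1.emeasure_space_1)
  finally show "emeasure (distr (M1 \<Otimes>\<^sub>M M2) N f) A = emeasure \<mu> A" .
qed

lemma distr_pair_measure_eqI_snd:
  assumes M1: "sigma_finite_measure M1" and M2: "prob_space M2"
    and f: "f \<in> measurable (M1 \<Otimes>\<^sub>M M2) N"
    and sections: "AE y in M2. distr M1 N (\<lambda>x. f (x, y)) = \<mu>"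
    and sets_\<mu>: "sets \<mu> = sets N"
  shows "distr (M1 \<Otimes>\<^sub>M M2) N f = \<mu>"
proof -
  interpret pair_sigma_finite M1 M2
    using M1 M2 by (simp add: pair_sigma_finite_def prob_space_imp_sigma_finite)
  have swap: "(\<lambda>(y, x). (x, y)) \<in> measurable (M2 \<Otimes>\<^sub>M M1) (M1 \<Otimes>\<^sub>M M2)"
    by (rule measurable_pair_swap')
  have "distr (M1 \<Otimes>\<^sub>M M2) N f = distr (M2 \<Otimes>\<^sub>M M1) N (f \<circ> (\<lambda>(y, x). (x, y)))"
    by (subst distr_pair_swap) (rule distr_distr[OF f swap])
  also have "\<dots> = \<mu>"
  proof (rule distr_pair_measure_eqI_fst[OF M2 M1 _ _ sets_\<mu>])
    show "f \<circ> (\<lambda>(y, x). (x, y)) \<in> measurable (M2 \<Otimes>\<^sub>M M1) N"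
      by (rule measurable_comp[OF swap f])
  qed (use sections in simp)
  finally show ?thesis .
qed

lemma haar_prob_space: "haar_prob K \<mu> \<Longrightarrow> prob_space \<mu>"
  unfolding haar_prob_def by simp

lemma sets_haar_prob: "haar_prob K \<mu> \<Longrightarrow> sets \<mu> = sets borel"
  unfolding haar_prob_def by simp

lemma distr_translate_haar_prob: "haar_prob K \<mu> \<Longrightarrow> y \<in> K \<Longrightarrow> distr \<mu> borel (\<lambda>x. y + x) = \<mu>"
  unfolding haar_prob_def by simp

lemma space_haar_prob: "haar_prob K \<mu> \<Longrightarrow> space \<mu> = UNIV"
  using sets_eq_imp_space_eq[OF sets_haar_prob] by simp

lemma haar_prob_carrier_sets: "haar_prob K \<mu> \<Longrightarrow> K \<in> sets borel"
  using emeasure_notin_sets[of K \<mu>] by (auto simp: haar_prob_def)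

lemma AE_in_haar_prob:
  assumes haar: "haar_prob K \<mu>"
  shows "AE x in \<mu>. x \<in> K"
proof (rule prob_space.AE_prob_1)
  show "prob_space \<mu>" by (rule haar_prob_space[OF haar])
  show "measure \<mu> K = 1" using haar by (simp add: haar_prob_def measure_def)
qed

lemma distr_add_haar_prob:
  fixes K :: "'a::{topological_ab_group_add, second_countable_topology} set"
  assumes haar: "haar_prob K \<mu>" and N: "prob_space N"
    and g: "g \<in> borel_measurable N" and g_in_K: "AE y in N. g y \<in> K"
  shows "distr (\<mu> \<Otimes>\<^sub>M N) borel (\<lambda>(x, y). x + g y) = \<mu>"
proof (rule distr_pair_measure_eqI_snd[OF _ N])
  show "sigma_finite_measure \<mu>"
    by (rule prob_space_imp_sigma_finite[OF haar_prob_space[OF haar]])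
  show "(\<lambda>(x, y). x + g y) \<in> borel_measurable (\<mu> \<Otimes>\<^sub>M N)"
    using g
    unfolding measurable_cong_sets[OF sets_pair_measure_cong[OF sets_haar_prob[OF haar] refl] refl]
    by measurable
  show "AE y in N. distr \<mu> borel (\<lambda>x. (case (x, y) of (x, y) \<Rightarrow> x + g y)) = \<mu>"
    using g_in_K
    by eventually_elim (simp add: add.commute[of _ "g _"] distr_translate_haar_prob[OF haar])
qed (rule sets_haar_prob[OF haar])

lemma haar_prob_unique:
  fixes K :: "'a::{topological_ab_group_add, second_countable_topology} set"
  assumes \<mu>: "haar_prob K \<mu>" and \<nu>: "haar_prob K \<nu>"
  shows "\<mu> = \<nu>"
proof -
  have "distr (\<mu> \<Otimes>\<^sub>M \<nu>) borel (\<lambda>(x, y). x + y) = \<mu>"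
    using distr_add_haar_prob[OF \<mu> haar_prob_space[OF \<nu>]
        measurable_ident_sets[OF sets_haar_prob[OF \<nu>]] AE_in_haar_prob[OF \<nu>]]
    by simp
  moreover have "distr (\<mu> \<Otimes>\<^sub>M \<nu>) borel (\<lambda>(x, y). x + y) = \<nu>"
  proof (rule distr_pair_measure_eqI_fst[OF haar_prob_space[OF \<mu>]])
    show "sigma_finite_measure \<nu>"
      by (rule prob_space_imp_sigma_finite[OF haar_prob_space[OF \<nu>]])
    show "(\<lambda>(x, y). x + y) \<in> borel_measurable (\<mu> \<Otimes>\<^sub>M \<nu>)"
      unfolding measurable_cong_sets[OF sets_pair_measure_cong[OF sets_haar_prob[OF \<mu>]
          sets_haar_prob[OF \<nu>]] refl]
      by measurable
    show "AE x in \<mu>. distr \<nu> borel (\<lambda>y. case (x, y) of (x, y) \<Rightarrow> x + y) = \<nu>"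
      using AE_in_haar_prob[OF \<mu>] by eventually_elim (simp add: distr_translate_haar_prob[OF \<nu>])
  qed (rule sets_haar_prob[OF \<nu>])
  ultimately show ?thesis by simp
qed

lemma subgroup_add_double_image:
  fixes K :: "'a::ab_group_add set"
  assumes K: "subgroup_add K"
  shows "subgroup_add ((\<lambda>x. x + x) ` K)"
  unfolding subgroup_add_def
proof (intro conjI ballI)
  show "0 \<in> (\<lambda>x. x + x) ` K" using K by (force simp: subgroup_add_def)
next
  fix a b assume "a \<in> (\<lambda>x. x + x) ` K" "b \<in> (\<lambda>x. x + x) ` K"
  then obtain x y where "x \<in> K" "y \<in> K" "a = x + x" "b = y + y" by auto
  then have "x + y \<in> K" "a + b = (x + y) + (x + y)"
    using K by (simp_all add: subgroup_add_def algebra_simps)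
  then show "a + b \<in> (\<lambda>x. x + x) ` K" by (rule rev_image_eqI)
next
  fix a assume "a \<in> (\<lambda>x. x + x) ` K"
  then obtain x where "x \<in> K" "a = x + x" by auto
  then have "- x \<in> K" "- a = - x + - x"
    using K by (simp_all add: subgroup_add_def)
  then show "- a \<in> (\<lambda>x. x + x) ` K" by (rule rev_image_eqI)
qed

lemma subgroup_eq_if_full_haar_measure:
  fixes K H :: "'a::{topological_ab_group_add, second_countable_topology} set"
  assumes haar: "haar_prob K \<mu>" and H: "subgroup_add H" "H \<subseteq> K" and full: "emeasure \<mu> H = 1"
  shows "H = K"
proof (rule antisym[OF \<open>H \<subseteq> K\<close>], rule subsetI, rule ccontr)
  interpret prob_space \<mu> by (rule haar_prob_space[OF haar])
  fix x assume x: "x \<in> K" and "x \<notin> H"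
  have H_sets: "H \<in> sets borel"
  proof (rule ccontr)
    assume "H \<notin> sets borel"
    then have "emeasure \<mu> H = 0" by (simp add: emeasure_notin_sets sets_haar_prob[OF haar])
    with full show False by simp
  qed
  have translate: "(\<lambda>y. x + y) \<in> measurable \<mu> borel"
    unfolding measurable_cong_sets[OF sets_haar_prob[OF haar] refl] by measurable
  define H' where "H' = (\<lambda>y. x + y) -` H"
  have H'_sets: "H' \<in> sets \<mu>"
    using measurable_sets[OF translate H_sets] by (simp add: H'_def space_haar_prob[OF haar])
  have "emeasure \<mu> H' = emeasure (distr \<mu> borel (\<lambda>y. x + y)) H"
    using emeasure_distr[OF translate H_sets] by (simp add: H'_def space_haar_prob[OF haar])
  then have H'_full: "emeasure \<mu> H' = 1"
    using full by (simp add: distr_translate_haar_prob[OF haar x])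
  have "H' \<inter> H = {}"
  proof (rule ccontr)
    assume "H' \<inter> H \<noteq> {}"
    then obtain y where "y \<in> H" "x + y \<in> H" by (auto simp: H'_def)
    then have "(x + y) + - y \<in> H" using H(1) unfolding subgroup_add_def by blast
    with \<open>x \<notin> H\<close> show False by simp
  qed
  then have "emeasure \<mu> (H' \<union> H) = 2"
    using H'_sets H'_full full H_sets sets_haar_prob[OF haar]
    by (subst plus_emeasure[symmetric]) auto
  then show False using emeasure_le_1[of "H' \<union> H"] by simp
qed

lemma corwin_if_distr_double_haar_prob:
  fixes K :: "'a::{topological_ab_group_add, t2_space, second_countable_topology} set"
  assumes haar: "haar_prob K \<mu>" and "compact K" and K: "subgroup_add K"
    and double: "distr \<mu> borel (\<lambda>x. x + x) = \<mu>"
  shows "corwin K"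
proof -
  interpret prob_space \<mu> by (rule haar_prob_space[OF haar])
  define D where "D = (\<lambda>x. x + x) ` K"
  have doubling: "(\<lambda>x. x + x) \<in> measurable \<mu> borel"
    unfolding measurable_cong_sets[OF sets_haar_prob[OF haar] refl] by measurable
  have "compact D"
    unfolding D_def by (rule compact_continuous_image[OF _ \<open>compact K\<close>]) (intro continuous_intros)
  then have D_sets: "D \<in> sets borel" by (simp add: compact_imp_closed)
  have D_sub: "D \<subseteq> K" using K by (auto simp: D_def subgroup_add_def)
  have "emeasure \<mu> K \<le> emeasure \<mu> ((\<lambda>x. x + x) -` D \<inter> space \<mu>)"
    using measurable_sets[OF doubling D_sets]
    by (intro emeasure_mono) (auto simp: D_def space_haar_prob[OF haar])
  also have "\<dots> = emeasure \<mu> D"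
    using emeasure_distr[OF doubling D_sets] by (simp add: double)
  finally have "emeasure \<mu> D = 1"
    using emeasure_le_1[of D] haar by (simp add: haar_prob_def)
  then have "D = K"
    using subgroup_eq_if_full_haar_measure[OF haar subgroup_add_double_image[OF K]] D_sub
    by (simp add: D_def)
  then show ?thesis by (simp add: corwin_def D_def)
qed

lemma haar_prob_distr_double:
  fixes K :: "'a::{topological_ab_group_add, second_countable_topology} set"
  assumes haar: "haar_prob K \<mu>" and K: "subgroup_add K" and "corwin K"
  shows "haar_prob K (distr \<mu> borel (\<lambda>x. x + x))"
  unfolding haar_prob_def
proof (intro conjI ballI)
  interpret prob_space \<mu> by (rule haar_prob_space[OF haar])
  have doubling: "(\<lambda>x. x + x) \<in> measurable \<mu> borel"
    unfolding measurable_cong_sets[OF sets_haar_prob[OF haar] refl] by measurable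
  show "prob_space (distr \<mu> borel (\<lambda>x. x + x))" by (rule prob_space_distr[OF doubling])
  show "sets (distr \<mu> borel (\<lambda>x. x + x)) = sets borel" by simp
  have "1 = emeasure \<mu> K" using haar by (simp add: haar_prob_def)
  also have "\<dots> \<le> emeasure \<mu> ((\<lambda>x. x + x) -` K \<inter> space \<mu>)"
    using measurable_sets[OF doubling haar_prob_carrier_sets[OF haar]] K
    by (intro emeasure_mono) (auto simp: subgroup_add_def space_haar_prob[OF haar])
  also have "\<dots> = emeasure (distr \<mu> borel (\<lambda>x. x + x)) K"
    by (rule emeasure_distr[OF doubling haar_prob_carrier_sets[OF haar], symmetric])
  finally show "emeasure (distr \<mu> borel (\<lambda>x. x + x)) K = 1"
    using prob_space.emeasure_le_1[OF prob_space_distr[OF doubling]] by (simp add: antisym)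
  fix x assume "x \<in> K"
  then obtain z where z: "z \<in> K" and x: "x = z + z"
    using \<open>corwin K\<close> by (auto simp: corwin_def)
  have translate: "(\<lambda>y. z + y) \<in> measurable \<mu> borel" "(\<lambda>y. x + y) \<in> borel_measurable borel"
    unfolding measurable_cong_sets[OF sets_haar_prob[OF haar] refl] by measurable
  have "(\<lambda>y. x + y) \<circ> (\<lambda>x. x + x) = (\<lambda>x. x + x) \<circ> (\<lambda>y. z + y)"
    by (auto simp: x algebra_simps)
  then have "distr (distr \<mu> borel (\<lambda>x. x + x)) borel (\<lambda>y. x + y)
      = distr (distr \<mu> borel (\<lambda>y. z + y)) borel (\<lambda>x. x + x)"
    using translate doubling by (simp add: distr_distr)
  then show "distr (distr \<mu> borel (\<lambda>x. x + x)) borel (\<lambda>y. x + y) = distr \<mu> borel (\<lambda>x. x + x)"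
    by (simp add: distr_translate_haar_prob[OF haar z])
qed

lemma distr_double_haar_prob_iff_corwin:
  fixes K :: "'a::{topological_ab_group_add, t2_space, second_countable_topology} set"
  assumes haar: "haar_prob K \<mu>" and "compact K" and K: "subgroup_add K"
  shows "distr \<mu> borel (\<lambda>x. x + x) = \<mu> \<longleftrightarrow> corwin K"
  using corwin_if_distr_double_haar_prob[OF assms]
    haar_prob_unique[OF haar_prob_distr_double[OF haar K] haar]
  by blast

lemma (in prob_space) AE_in_if_haar_prob_distr:
  assumes "haar_prob K (distr M borel X)" and "X \<in> borel_measurable M"
  shows "AE \<omega> in M. X \<omega> \<in> K"
  using AE_in_haar_prob[OF assms(1)] haar_prob_carrier_sets[OF assms(1)]
  by (subst (asm) AE_distr_iff[OF assms(2)]) simp_all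

lemma (in prob_space) distr_triple_eq_pair_measure:
  fixes X Y Z :: "'a \<Rightarrow> 'b::topological_space"
  assumes ind: "indep_vars (\<lambda>_. borel) (\<lambda>i. [X, Y, Z] ! i) {0, 1, 2}"
  shows "distr M (borel \<Otimes>\<^sub>M borel \<Otimes>\<^sub>M borel) (\<lambda>\<omega>. (X \<omega>, Y \<omega>, Z \<omega>))
    = distr M borel X \<Otimes>\<^sub>M distr M (borel \<Otimes>\<^sub>M borel) (\<lambda>\<omega>. (Y \<omega>, Z \<omega>))"
proof -
  let ?YZ = "\<lambda>\<omega>. (Y \<omega>, Z \<omega>)" and ?XYZ = "\<lambda>\<omega>. (X \<omega>, Y \<omega>, Z \<omega>)"
  have "\<forall>i\<in>{0, 1, 2}. [X, Y, Z] ! i \<in> borel_measurable M"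
    using ind by (simp add: indep_vars_def)
  then have X: "X \<in> borel_measurable M" and Y: "Y \<in> borel_measurable M"
    and Z: "Z \<in> borel_measurable M"
    by auto
  have YZ: "?YZ \<in> measurable M (borel \<Otimes>\<^sub>M borel)" using Y Z by measurable
  have XYZ: "?XYZ \<in> measurable M (borel \<Otimes>\<^sub>M borel \<Otimes>\<^sub>M borel)" using X YZ by measurable
  \<comment> \<open>\<open>indep_var\<close> needs both variables in one type, so \<open>X\<close> is paired with itself.\<close>
  have "indep_var
      (borel \<Otimes>\<^sub>M borel) ((\<lambda>f. (f 0, f 0)) \<circ> (\<lambda>\<omega>. restrict (\<lambda>i. ([X, Y, Z] ! i) \<omega>) {0}))
      (borel \<Otimes>\<^sub>M borel) ((\<lambda>f. (f 1, f 2)) \<circ> (\<lambda>\<omega>. restrict (\<lambda>i. ([X, Y, Z] ! i) \<omega>) {1, 2}))"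
    by (rule indep_var_compose[OF indep_var_restrict[OF ind]])
      (auto intro!: measurable_Pair measurable_component_singleton)
  then have ind_XY: "indep_var (borel \<Otimes>\<^sub>M borel) (\<lambda>\<omega>. (X \<omega>, X \<omega>)) (borel \<Otimes>\<^sub>M borel) ?YZ"
    by (simp add: comp_def)
  interpret X: prob_space "distr M borel X" by (rule prob_space_distr[OF X])
  interpret YZ: prob_space "distr M (borel \<Otimes>\<^sub>M borel) ?YZ" by (rule prob_space_distr[OF YZ])
  show ?thesis
  proof (rule pair_measure_eqI[symmetric])
    show "sets (distr M borel X \<Otimes>\<^sub>M distr M (borel \<Otimes>\<^sub>M borel) ?YZ)
      = sets (distr M (borel \<Otimes>\<^sub>M borel \<Otimes>\<^sub>M borel) ?XYZ)"
      by (simp cong: sets_pair_measure_cong)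
    fix A C assume "A \<in> sets (distr M borel X)" "C \<in> sets (distr M (borel \<Otimes>\<^sub>M borel) ?YZ)"
    then have A: "A \<in> sets borel" and C: "C \<in> sets (borel \<Otimes>\<^sub>M borel)" by simp_all
    have "prob ((\<lambda>\<omega>. ((X \<omega>, X \<omega>), ?YZ \<omega>)) -` ((A \<times> A) \<times> C) \<inter> space M)
      = prob ((\<lambda>\<omega>. (X \<omega>, X \<omega>)) -` (A \<times> A) \<inter> space M) * prob (?YZ -` C \<inter> space M)"
      using A C by (intro indep_varD[OF ind_XY]) auto
    moreover have "(\<lambda>\<omega>. ((X \<omega>, X \<omega>), ?YZ \<omega>)) -` ((A \<times> A) \<times> C) = ?XYZ -` (A \<times> C)"
      "(\<lambda>\<omega>. (X \<omega>, X \<omega>)) -` (A \<times> A) = X -` A"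
      by auto
    ultimately show "emeasure (distr M borel X) A * emeasure (distr M (borel \<Otimes>\<^sub>M borel) ?YZ) C
      = emeasure (distr M (borel \<Otimes>\<^sub>M borel \<Otimes>\<^sub>M borel) ?XYZ) (A \<times> C)"
      using A C X YZ XYZ by (simp add: emeasure_distr emeasure_eq_measure ennreal_mult)
  qed (simp_all add: prob_space_imp_sigma_finite X.prob_space_axioms YZ.prob_space_axioms)
qed

lemma (in prob_space) distr_add_haar_prob_indep:
  fixes \<xi> :: "'a \<Rightarrow> 'b::{topological_ab_group_add, second_countable_topology}"
    and \<alpha> :: "'a \<Rightarrow> 'c::countable" and \<zeta> :: "'a \<Rightarrow> 'd"
  assumes haar: "haar_prob K (distr M borel \<xi>)"
    and \<xi>: "\<xi> \<in> borel_measurable M" and \<alpha>: "\<alpha> \<in> measurable M (count_space UNIV)"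
    and \<zeta>: "\<zeta> \<in> measurable M S"
    and indep_\<zeta>: "distr M (borel \<Otimes>\<^sub>M S) (\<lambda>\<omega>. (\<xi> \<omega>, \<zeta> \<omega>)) = distr M borel \<xi> \<Otimes>\<^sub>M distr M S \<zeta>"
    and indep_\<alpha>: "distr M (count_space UNIV \<Otimes>\<^sub>M (borel \<Otimes>\<^sub>M S)) (\<lambda>\<omega>. (\<alpha> \<omega>, \<xi> \<omega>, \<zeta> \<omega>))
      = distr M (count_space UNIV) \<alpha> \<Otimes>\<^sub>M distr M (borel \<Otimes>\<^sub>M S) (\<lambda>\<omega>. (\<xi> \<omega>, \<zeta> \<omega>))"
    and g: "\<And>a. g a \<in> borel_measurable S" and g_in_K: "\<And>a. AE \<omega> in M. g a (\<zeta> \<omega>) \<in> K"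
  shows "distr M borel (\<lambda>\<omega>. \<xi> \<omega> + g (\<alpha> \<omega>) (\<zeta> \<omega>)) = distr M borel \<xi>"
proof -
  define \<mu> where "\<mu> = distr M borel \<xi>"
  define T where "T = distr M S \<zeta>"
  interpret \<mu>T: pair_prob_space \<mu> T
    unfolding \<mu>_def T_def pair_prob_space_def pair_sigma_finite_def
    using \<xi> \<zeta> by (simp add: prob_space_distr prob_space_imp_sigma_finite)
  let ?f = "\<lambda>(a, x, z). x + g a z"
  have f: "?f \<in> borel_measurable (count_space UNIV \<Otimes>\<^sub>M (borel \<Otimes>\<^sub>M S))"
    by (rule measurable_pair_measure_countable1) (use g in simp_all)
  have joint: "(\<lambda>\<omega>. (\<alpha> \<omega>, \<xi> \<omega>, \<zeta> \<omega>)) \<in> measurable M (count_space UNIV \<Otimes>\<^sub>M (borel \<Otimes>\<^sub>M S))"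
    by (intro measurable_Pair \<alpha> \<xi> \<zeta>)
  have "distr M borel (\<lambda>\<omega>. \<xi> \<omega> + g (\<alpha> \<omega>) (\<zeta> \<omega>))
      = distr (distr M (count_space UNIV \<Otimes>\<^sub>M (borel \<Otimes>\<^sub>M S)) (\<lambda>\<omega>. (\<alpha> \<omega>, \<xi> \<omega>, \<zeta> \<omega>))) borel ?f"
    by (simp add: distr_distr[OF f joint] comp_def)
  also have "\<dots> = distr (distr M (count_space UNIV) \<alpha> \<Otimes>\<^sub>M (\<mu> \<Otimes>\<^sub>M T)) borel ?f"
    by (simp add: indep_\<alpha> indep_\<zeta> \<mu>_def T_def)
  also have "\<dots> = \<mu>"
  proof (rule distr_pair_measure_eqI_fst)
    show "prob_space (distr M (count_space UNIV) \<alpha>)" by (rule prob_space_distr[OF \<alpha>])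
    show "sigma_finite_measure (\<mu> \<Otimes>\<^sub>M T)" by (rule prob_space_imp_sigma_finite) unfold_locales
    show "?f \<in> borel_measurable (distr M (count_space UNIV) \<alpha> \<Otimes>\<^sub>M (\<mu> \<Otimes>\<^sub>M T))"
    proof -
      have sets_eq: "sets (distr M (count_space UNIV) \<alpha> \<Otimes>\<^sub>M (\<mu> \<Otimes>\<^sub>M T))
          = sets (count_space UNIV \<Otimes>\<^sub>M (borel \<Otimes>\<^sub>M S))"
        by (intro sets_pair_measure_cong) (simp_all add: \<mu>_def T_def)
      show ?thesis using f unfolding measurable_cong_sets[OF sets_eq refl] .
    qed
    show "AE a in distr M (count_space UNIV) \<alpha>. distr (\<mu> \<Otimes>\<^sub>M T) borel (\<lambda>y. ?f (a, y)) = \<mu>"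
    proof (rule AE_I2)
      fix a
      have "AE z in T. g a z \<in> K"
        unfolding T_def using g_in_K[of a] g[of a] haar_prob_carrier_sets[OF haar]
        by (subst AE_distr_iff[OF \<zeta>]) simp_all
      moreover have "g a \<in> borel_measurable T" using g[of a] by (simp add: T_def)
      ultimately show "distr (\<mu> \<Otimes>\<^sub>M T) borel (\<lambda>y. ?f (a, y)) = \<mu>"
        using distr_add_haar_prob[OF haar[folded \<mu>_def] \<mu>T.M2.prob_space_axioms]
        by (simp add: split_beta')
    qed
  qed (simp add: \<mu>_def)
  finally show ?thesis by (simp add: \<mu>_def)
qed

theorem proposition2p6:
  fixes M :: "'w measure"
    and K :: "'a::{topological_ab_group_add, t2_space, second_countable_topology} set"
    and \<xi>1 \<xi>2 \<xi>3 :: "'w \<Rightarrow> 'a"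
    and \<alpha> :: "'w \<Rightarrow> bool"
  assumes "locally_compact_space (euclidean :: 'a topology)"
    and "compact K" and "subgroup_add K"
    and "prob_space M"
    and "\<xi>1 \<in> borel_measurable M" and "\<xi>2 \<in> borel_measurable M" and "\<xi>3 \<in> borel_measurable M"
    and "prob_space.indep_vars M (\<lambda>_. borel) (\<lambda>i. [\<xi>1, \<xi>2, \<xi>3] ! i) {0, 1, 2}"
    and "haar_prob K (distr M borel \<xi>1)"
    and "distr M borel \<xi>2 = distr M borel \<xi>1"
    and "distr M borel \<xi>3 = distr M borel \<xi>1"
    and "\<alpha> \<in> measurable M (count_space UNIV)"
    and "distr M (count_space UNIV) \<alpha> = measure_pmf (bernoulli_pmf (1/2))"
    and "distr M (count_space UNIV \<Otimes>\<^sub>M (borel \<Otimes>\<^sub>M borel \<Otimes>\<^sub>M borel))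
           (\<lambda>\<omega>. (\<alpha> \<omega>, (\<xi>1 \<omega>, \<xi>2 \<omega>, \<xi>3 \<omega>)))
         = distr M (count_space UNIV) \<alpha> \<Otimes>\<^sub>M
           distr M (borel \<Otimes>\<^sub>M borel \<Otimes>\<^sub>M borel) (\<lambda>\<omega>. (\<xi>1 \<omega>, \<xi>2 \<omega>, \<xi>3 \<omega>))"
  shows "distr M borel (\<lambda>\<omega>. \<xi>1 \<omega> + \<xi>1 \<omega>)
           = distr M borel (\<lambda>\<omega>. \<xi>1 \<omega> + \<xi>2 \<omega> + (if \<alpha> \<omega> then \<xi>3 \<omega> + \<xi>3 \<omega> else 0))
         \<longleftrightarrow> corwin K"
proof -
  interpret prob_space M by (rule assms(4))
  note haar = assms(9) and \<xi>1 = assms(5)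
  have "AE \<omega> in M. \<xi>2 \<omega> \<in> K" "AE \<omega> in M. \<xi>3 \<omega> \<in> K"
    using AE_in_if_haar_prob_distr[of K] haar assms(6,7,10,11) by simp_all
  then have in_K: "AE \<omega> in M. \<xi>2 \<omega> + (if a then \<xi>3 \<omega> + \<xi>3 \<omega> else 0) \<in> K" for a
    by eventually_elim (use assms(3) in \<open>auto simp: subgroup_add_def\<close>)
  have "distr M borel (\<lambda>\<omega>. \<xi>1 \<omega> + \<xi>1 \<omega>) = distr (distr M borel \<xi>1) borel (\<lambda>x. x + x)"
    using \<xi>1 by (simp add: distr_distr comp_def)
  moreover have "distr M borel (\<lambda>\<omega>. \<xi>1 \<omega> + \<xi>2 \<omega> + (if \<alpha> \<omega> then \<xi>3 \<omega> + \<xi>3 \<omega> else 0))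
      = distr M borel \<xi>1"
    using distr_add_haar_prob_indep[OF haar \<xi>1 assms(12) _
        distr_triple_eq_pair_measure[OF assms(8)] assms(14),
        where g = "\<lambda>a (u, v). u + (if a then v + v else 0)"] in_K assms(6,7)
    by (simp add: add.assoc)
  ultimately show ?thesis
    using distr_double_haar_prob_iff_corwin[OF haar assms(2,3)] by simp
qed

end
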